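(* Let $A\in\mathbb{R}^{n\times n}$, $B\in\mathbb{R}^{n\times m}$, $L\in\mathbb{R}^{n\times m}$, $R\in\mathbb{R}^{m\times m}$ with $R$ symmetric positive definite, and $A_0^i\in\mathbb{R}^{n\times n}$, $B_0^i\in\mathbb{R}^{n\times m}$ for $i=1,\dots,r$. If the pair $(A,B)$ is stabilizable, then for every symmetric positive semidefinite $\widetilde X\in\mathbb{R}^{n\times n}$ the pair $\big(A_{\mathrm c}(\widetilde X),\,G_{\mathrm c}(\widetilde X)\big)$ is stabilizable, where $A_{\mathrm c}(X)=A-B\,[R_{\mathrm c}(X)]^{-1}[L_{\mathrm c}(X)]^{\mathsf T}$, $G_{\mathrm c}(X)=B\,[R_{\mathrm c}(X)]^{-1}B^{\mathsf T}$, $L_{\mathrm c}(X)=L+\sum_{i=1}^r (A_0^i)^{\mathsf T}XB_0^i$, $R_{\mathrm c}(X)=R+\sum_{i=1}^r (B_0^i)^{\mathsf T}XB_0^i$.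
   Context: A pair $(A,G)$ with $A,G\in\mathbb{R}^{n\times n}$ (or $(A,B)$ with $B\in\mathbb{R}^{n\times m}$) is stabilizable if there is no nonzero $y\in\mathbb{C}^n$ and $\lambda\in\mathbb{C}$ with $\mathrm{Re}(\lambda)\ge 0$ such that $y^{\mathsf H}[A-\lambda I,\ G]=0$ (resp. $y^{\mathsf H}[A-\lambda I,\ B]=0$). For $X\succeq 0$, $R_{\mathrm c}(X)\succeq R\succ 0$ is invertible. *)

theory Defs
  imports "HOL-Analysis.Analysis"
begin

definition cmat :: "real^'k^'n \<Rightarrow> complex^'k^'n" where
  "cmat M = (\<chi> i j. complex_of_real (M $ i $ j))"

text \<open>Conjugate of a complex vector; y^H M is (cvec_cnj y) v* M.\<close>
definition cvec_cnj :: "complex^'n \<Rightarrow> complex^'n" where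
  "cvec_cnj y = (\<chi> i. cnj (y $ i))"

definition stabilizable :: "real^'n^'n \<Rightarrow> real^'k^'n \<Rightarrow> bool" where
  "stabilizable A G \<longleftrightarrow>
     \<not> (\<exists>(y::complex^'n) (s::complex). y \<noteq> 0 \<and> Re s \<ge> 0 \<and>
          cvec_cnj y v* (cmat A - mat s) = 0 \<and>
          cvec_cnj y v* cmat G = 0)"

definition psd :: "real^'n^'n \<Rightarrow> bool" where
  "psd X \<longleftrightarrow> transpose X = X \<and> (\<forall>x. 0 \<le> x \<bullet> (X *v x))"

definition pd :: "real^'n^'n \<Rightarrow> bool" where
  "pd X \<longleftrightarrow> transpose X = X \<and> (\<forall>x. x \<noteq> 0 \<longrightarrow> 0 < x \<bullet> (X *v x))"

definition Lc :: "real^'m^'n \<Rightarrow> nat \<Rightarrow> (nat \<Rightarrow> real^'n^'n) \<Rightarrow> (nat \<Rightarrow> real^'m^'n)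
                  \<Rightarrow> real^'n^'n \<Rightarrow> real^'m^'n" where
  "Lc L r A0 B0 X = L + (\<Sum>i\<in>{1..r}. transpose (A0 i) ** X ** B0 i)"

definition Rc :: "real^'m^'m \<Rightarrow> nat \<Rightarrow> (nat \<Rightarrow> real^'m^'n)
                  \<Rightarrow> real^'n^'n \<Rightarrow> real^'m^'m" where
  "Rc R r B0 X = R + (\<Sum>i\<in>{1..r}. transpose (B0 i) ** X ** B0 i)"

definition Ac :: "real^'n^'n \<Rightarrow> real^'m^'n \<Rightarrow> real^'m^'n \<Rightarrow> real^'m^'m \<Rightarrow> nat
                  \<Rightarrow> (nat \<Rightarrow> real^'n^'n) \<Rightarrow> (nat \<Rightarrow> real^'m^'n) \<Rightarrow> real^'n^'n \<Rightarrow> real^'n^'n" where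
  "Ac A B L R r A0 B0 X = A - B ** matrix_inv (Rc R r B0 X) ** transpose (Lc L r A0 B0 X)"

definition Gc :: "real^'m^'n \<Rightarrow> real^'m^'m \<Rightarrow> nat \<Rightarrow> (nat \<Rightarrow> real^'m^'n)
                  \<Rightarrow> real^'n^'n \<Rightarrow> real^'n^'n" where
  "Gc B R r B0 X = B ** matrix_inv (Rc R r B0 X) ** transpose B"

end

theory Submission
  imports Defs
begin

text \<open>Suppose \<open>y\<^sup>H [A\<^sub>c - \<lambda>I, G\<^sub>c] = 0\<close> and put \<open>u = y\<^sup>H B\<close>. Then
  \<open>0 = y\<^sup>H G\<^sub>c y = u R\<^sub>c\<inverse> u\<^sup>H\<close>; since \<open>R\<^sub>c\<close> is positive definite for positive
  semidefinite \<open>X\<close>, so is its inverse, which forces \<open>u = 0\<close>. But then \<open>y\<^sup>H A\<^sub>c = y\<^sup>H A\<close>,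
  and \<open>y\<close> would show that \<open>(A, B)\<close> is not stabilizable. Nothing about the gain
  \<open>L\<^sub>c\<^sup>T\<close> is used: any feedback \<open>A - B M K\<close> with \<open>M\<close> positive definite works.\<close>

lemma transpose_add: "transpose (A + B) = transpose A + transpose (B :: 'a::comm_semiring_1^'n^'m)"
  by (simp add: transpose_def vec_eq_iff)

lemma psd_zero: "psd 0"
  by (simp add: psd_def transpose_def vec_eq_iff)

lemma psd_add: "psd X \<Longrightarrow> psd Y \<Longrightarrow> psd (X + Y)"
  by (simp add: psd_def transpose_add matrix_vector_mult_add_rdistrib inner_add_right)

lemma psd_sum: "(\<And>i. i \<in> I \<Longrightarrow> psd (X i)) \<Longrightarrow> psd (\<Sum>i\<in>I. X i)"
  by (induction I rule: infinite_finite_induct) (auto simp: psd_zero psd_add)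

lemma psd_congruence:
  fixes C :: "real^'m^'n"
  assumes "psd X"
  shows "psd (transpose C ** X ** C)"
proof -
  have "x \<bullet> ((transpose C ** X ** C) *v x) = (C *v x) \<bullet> (X *v (C *v x))" for x
    by (metis dot_lmul_matrix matrix_vector_mul_assoc vector_transpose_matrix)
  with assms show ?thesis
    by (simp add: psd_def matrix_transpose_mul matrix_mul_assoc)
qed

lemma pd_add_psd: "pd R \<Longrightarrow> psd S \<Longrightarrow> pd (R + S)"
  by (simp add: pd_def psd_def transpose_add matrix_vector_mult_add_rdistrib inner_add_right
      add_pos_nonneg)

lemma pd_Rc: "pd R \<Longrightarrow> psd X \<Longrightarrow> pd (Rc R r B0 X)"
  unfolding Rc_def by (intro pd_add_psd psd_sum psd_congruence)

lemma pd_invertible: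
  assumes "pd M"
  shows "invertible M"
proof -
  have "\<forall>x. M *v x = 0 \<longrightarrow> x = 0"
    using assms unfolding pd_def by (metis inner_zero_right less_irrefl)
  then show ?thesis
    by (metis invertible_left_inverse matrix_left_invertible_ker)
qed

lemma matrix_inv_inverse:
  assumes "invertible (M :: 'a::semiring_1^'n^'m)"
  shows "M ** matrix_inv M = mat 1" and "matrix_inv M ** M = mat 1"
  using someI_ex[OF assms[unfolded invertible_def]] by (simp_all add: matrix_inv_def)

lemma matrix_inv_unique:
  fixes M :: "'a::comm_semiring_1^'n^'n"
  assumes "M ** N = mat 1" and "N ** M = mat 1"
  shows "matrix_inv M = N"
proof -
  have "invertible M" using assms invertible_def by blast
  have "matrix_inv M = matrix_inv M ** (M ** N)"
    by (simp add: assms(1))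
  also have "\<dots> = N"
    by (simp add: matrix_mul_assoc matrix_inv_inverse(2)[OF \<open>invertible M\<close>])
  finally show ?thesis .
qed

lemma transpose_matrix_inv:
  fixes M :: "'a::comm_semiring_1^'n^'n"
  assumes "invertible M"
  shows "transpose (matrix_inv M) = matrix_inv (transpose M)"
  using matrix_inv_inverse[OF assms]
  by (intro matrix_inv_unique[symmetric]) (metis matrix_transpose_mul transpose_mat)+

lemma pd_matrix_inv:
  assumes "pd M"
  shows "pd (matrix_inv M)"
  unfolding pd_def
proof (intro conjI allI impI)
  have "invertible M" using assms by (rule pd_invertible)
  then show "transpose (matrix_inv M) = matrix_inv M"
    using assms by (simp add: transpose_matrix_inv pd_def)
  fix x :: "real^'a" assume "x \<noteq> 0"
  define z where "z = matrix_inv M *v x"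
  have x: "x = M *v z"
    by (simp add: z_def matrix_vector_mul_assoc matrix_inv_inverse(1)[OF \<open>invertible M\<close>])
  with \<open>x \<noteq> 0\<close> have "z \<noteq> 0"
    by auto
  then have "0 < z \<bullet> (M *v z)"
    using assms by (simp add: pd_def)
  also have "\<dots> = x \<bullet> (matrix_inv M *v x)"
    by (metis x z_def inner_commute)
  finally show "0 < x \<bullet> (matrix_inv M *v x)" .
qed

definition cvec_Re :: "complex^'n \<Rightarrow> real^'n" where
  "cvec_Re u = (\<chi> k. Re (u $ k))"

definition cvec_Im :: "complex^'n \<Rightarrow> real^'n" where
  "cvec_Im u = (\<chi> k. Im (u $ k))"

lemma cmat_diff: "cmat (A - B) = cmat A - cmat B"
  by (simp add: cmat_def vec_eq_iff)

lemma cmat_mult: "cmat (A ** B) = cmat A ** cmat B"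
  by (simp add: cmat_def vec_eq_iff matrix_matrix_mult_def)

lemma cmat_transpose: "cmat (transpose A) = transpose (cmat A)"
  by (simp add: cmat_def transpose_def vec_eq_iff)

text \<open>On \<open>complex^'n\<close>, \<open>x \<bullet> y\<close> is the real inner product \<open>Re (\<Sum>i. x$i * cnj (y$i))\<close>.\<close>

lemma inner_cmat_mult_vector: "(cmat B *v w) \<bullet> z = w \<bullet> (z v* cmat B)"
  unfolding cmat_def inner_vec_def inner_complex_def matrix_vector_mult_def vector_matrix_mult_def
  by (simp add: sum_distrib_left sum_distrib_right sum.distrib[symmetric])
     (subst sum.swap, simp add: algebra_simps)

lemma inner_cmat_quadratic_form:
  "(u v* cmat M) \<bullet> u = (cvec_Re u v* M) \<bullet> cvec_Re u + (cvec_Im u v* M) \<bullet> cvec_Im u"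
  by (simp add: cmat_def cvec_Re_def cvec_Im_def inner_vec_def inner_complex_def
      vector_matrix_mult_def sum_distrib_right sum.distrib[symmetric] algebra_simps)

lemma pd_cmat_quadratic_form_pos:
  assumes "pd M" and "u \<noteq> 0"
  shows "0 < (u v* cmat M) \<bullet> u"
proof -
  have pos: "x \<noteq> 0 \<Longrightarrow> 0 < (x v* M) \<bullet> x" for x
    using assms(1) by (simp add: pd_def dot_lmul_matrix)
  then have nonneg: "0 \<le> (x v* M) \<bullet> x" for x
    by (cases "x = 0") (auto intro: less_imp_le)
  from \<open>u \<noteq> 0\<close> have "cvec_Re u \<noteq> 0 \<or> cvec_Im u \<noteq> 0"
    by (auto simp: cvec_Re_def cvec_Im_def vec_eq_iff complex_eq_iff)
  then show ?thesis
    using pos nonneg by (auto simp: inner_cmat_quadratic_form add_pos_nonneg add_nonneg_pos)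
qed

lemma stabilizable_feedback:
  fixes A :: "real^'n^'n" and B :: "real^'m^'n" and M :: "real^'m^'m" and K :: "real^'n^'m"
  assumes "pd M" and "stabilizable A B"
  shows "stabilizable (A - B ** M ** K) (B ** M ** transpose B)"
  unfolding stabilizable_def
proof clarify
  fix y :: "complex^'n" and s :: complex
  assume "y \<noteq> 0" and "0 \<le> Re s"
    and eig: "cvec_cnj y v* (cmat (A - B ** M ** K) - mat s) = 0"
    and ker: "cvec_cnj y v* cmat (B ** M ** transpose B) = 0"
  define u where "u = cvec_cnj y v* cmat B"
  have "(cvec_cnj y v* cmat (B ** M ** transpose B)) \<bullet> cvec_cnj y
      = (cmat B *v (u v* cmat M)) \<bullet> cvec_cnj y"
    by (simp add: u_def cmat_mult cmat_transpose vector_matrix_mul_assoc[symmetric])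
  also have "\<dots> = (u v* cmat M) \<bullet> u"
    by (simp add: u_def inner_cmat_mult_vector)
  finally have "(u v* cmat M) \<bullet> u = 0"
    using ker by simp
  then have "u = 0"
    using pd_cmat_quadratic_form_pos[OF assms(1)] by force
  then have "cvec_cnj y v* cmat (A - B ** M ** K) = cvec_cnj y v* cmat A"
    by (simp add: u_def cmat_diff cmat_mult vector_matrix_mult_diff_rdistrib
        vector_matrix_mul_assoc[symmetric])
  with eig have "cvec_cnj y v* (cmat A - mat s) = 0"
    by (simp add: vector_matrix_mult_diff_rdistrib)
  with \<open>u = 0\<close> \<open>y \<noteq> 0\<close> \<open>0 \<le> Re s\<close> assms(2) show False
    unfolding stabilizable_def u_def by blast
qed

theorem lemma2p1:
  fixes A :: "real^'n^'n" and B L :: "real^'m^'n" and R :: "real^'m^'m"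
    and r :: nat and A0 :: "nat \<Rightarrow> real^'n^'n" and B0 :: "nat \<Rightarrow> real^'m^'n"
    and Xt :: "real^'n^'n"
  assumes "pd R"
    and "stabilizable A B"
    and "psd Xt"
  shows "stabilizable (Ac A B L R r A0 B0 Xt) (Gc B R r B0 Xt)"
  unfolding Ac_def Gc_def
  using stabilizable_feedback pd_matrix_inv pd_Rc assms by blast

end
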